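(* Let $X,Y,Z,W$ be Banach spaces, $F:X\times Y\rightrightarrows Z$ a multifunction, $g:W\to Z$ a function, and $(\overline{x},\overline{y},\overline{z},\overline{w})\in X\times Y\times Z\times W$ with $\overline{z}:=-g(\overline{w})\in F(\overline{x},\overline{y})$. Define $\Gamma:Y\times W\rightrightarrows X$ by $\Gamma(y,w)=\{x\in X: 0\in F(x,y)+g(w)\}$. Suppose: (i) $F$ is Lipschitz-like with respect to $y$ uniformly in $x$ around $((\overline{x},\overline{y}),\overline{z})$ with constant $\eta\ge0$; (ii) $F$ is metrically regular with respect to $x$ uniformly in $y$ around $((\overline{x},\overline{y}),\overline{z})$ with constant $k>0$; (iii) $F(\cdot,y)$ is inner semicontinuous at $(\overline{x},\overline{z})$ for every $y$ in a neighborhood of $\overline{y}$; (iv) $g$ is locally Lipschitz around $\overline{w}$ with constant $\lambda$. Then there exists $\alpha>0$ such that for every $(y,w),(y',w')\in D(\overline{y},\alpha)\times D(\overline{w},\alpha)$ and every $\varepsilon>0$, \[ \Gamma(y',w')\cap D(\overline{x},\alpha)\subset\Gamma(y,w)+(k+\varepsilon)(\eta\|y-y'\|+\lambda\|w-w'\|)\mathbb{D}_X. \] In particular, $\Gamma$ is Lipschitz-like around $((\overline{y},\overline{w}),\overline{x})$ and \[ \operatorname{lip}\Gamma((\overline{y},\overline{w}),\overline{x})\le\widehat{\operatorname{reg}}_xF((\overline{x},\overline{y}),\overline{z})\cdot\max\{\widehat{\operatorname{lip}}_yF((\overline{x},\overline{y}),\overline{z}),\operatorname{lip}g(\overline{w})\}.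 \]
   Context: $B(x,r)$ and $D(x,r)$ are the open and closed balls, $\mathbb{D}_X$ the closed unit ball, $d(x,\emptyset)=\infty$; products carry the sum norm. For $F:X\times Y\rightrightarrows Z$ write $F_y=F(\cdot,y)$, $F_x=F(x,\cdot)$. $F$ is Lipschitz-like with respect to $y$ uniformly in $x$ around $((\overline{x},\overline{y}),\overline{z})$ with constant $L$ if there are neighborhoods $U$ of $\overline{x}$, $V$ of $\overline{y}$, $W_0$ of $\overline{z}$ with $F(x,y)\cap W_0\subset F(x,y')+L\|y-y'\|\mathbb{D}_Z$ for all $x\in U$, $y,y'\in V$; $\widehat{\operatorname{lip}}_yF((\overline{x},\overline{y}),\overline{z})$ is the infimum of such $L$. $F$ is metrically regular with respect to $x$ uniformly in $y$ around $((\overline{x},\overline{y}),\overline{z})$ with constant $L$ if there are such neighborhoods with $d(x,F_y^{-1}(z))\le L\,d(z,F_y(x))$ for all $(x,y,z)\in U\times V\times W_0$; $\widehat{\operatorname{reg}}_xF((\overline{x},\overline{y}),\overline{z})$ is the infimum of such $L$. A multifunction $T$ is inner semicontinuous at $(a,b)\in\operatorname{Gr}T$ if for every open $D\ni b$ there is a neighborhood $U$ of $a$ with $T(a')\cap D\ne\emptyset$ for all $a'\in U$. $T:A\rightrightarrows B$ is Lipschitz-like around $(\overline{a},\overline{b})$ with constant $L$ if there are neighborhoods $U$ of $\overline{a}$, $V$ of $\overline{b}$ with $T(a)\cap V\subset T(u)+L\|a-u\|\mathbb{D}_B$ for all $a,u\in U$; $\operatorname{lip}T(\overline{a},\overline{b})$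 is the infimum of such $L$; for a function $g$, $\operatorname{lip}g(\overline{w})$ is the infimum of Lipschitz constants of $g$ on neighborhoods of $\overline{w}$. *)

theory Defs
  imports "HOL-Analysis.Analysis"
begin

text \<open>Multifunctions F : X x Y =>> Z are modelled as F :: 'x => 'y => 'z set.
  The inclusion  A \<subseteq> B + r D  (r \<ge> 0, D the closed unit ball) is written
  A \<subseteq> (\<Union>b\<in>B. cball b r).\<close>

definition lip_like_y ::
  "('x::real_normed_vector \<Rightarrow> 'y::real_normed_vector \<Rightarrow> 'z::real_normed_vector set)
    \<Rightarrow> 'x \<Rightarrow> 'y \<Rightarrow> 'z \<Rightarrow> real \<Rightarrow> bool" where
  "lip_like_y F xb yb zb L \<longleftrightarrow>
     (\<exists>U V W0. open U \<and> xb \<in> U \<and> open V \<and> yb \<in> V \<and> open W0 \<and> zb \<in> W0 \<and>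
        (\<forall>x\<in>U. \<forall>y\<in>V. \<forall>y'\<in>V. F x y \<inter> W0 \<subseteq> (\<Union>z\<in>F x y'. cball z (L * norm (y - y')))))"

definition lip_hat_y ::
  "('x::real_normed_vector \<Rightarrow> 'y::real_normed_vector \<Rightarrow> 'z::real_normed_vector set)
    \<Rightarrow> 'x \<Rightarrow> 'y \<Rightarrow> 'z \<Rightarrow> real" where
  "lip_hat_y F xb yb zb = Inf {L. L \<ge> 0 \<and> lip_like_y F xb yb zb L}"

text \<open>Metric regularity with respect to x uniformly in y, with constant L:
  d(x, F_y^{-1}(z)) \<le> L d(z, F_y(x)), with the convention d(.,{}) = \<infinity>
  (so the inequality is trivial when F_y(x) is empty, and forces F_y^{-1}(z)
  to be nonempty otherwise).\<close>
definition metreg_x ::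
  "('x::real_normed_vector \<Rightarrow> 'y::real_normed_vector \<Rightarrow> 'z::real_normed_vector set)
    \<Rightarrow> 'x \<Rightarrow> 'y \<Rightarrow> 'z \<Rightarrow> real \<Rightarrow> bool" where
  "metreg_x F xb yb zb L \<longleftrightarrow>
     (\<exists>U V W0. open U \<and> xb \<in> U \<and> open V \<and> yb \<in> V \<and> open W0 \<and> zb \<in> W0 \<and>
        (\<forall>x\<in>U. \<forall>y\<in>V. \<forall>z\<in>W0. F x y \<noteq> {} \<longrightarrow>
            ({u. z \<in> F u y} \<noteq> {} \<and>
             infdist x {u. z \<in> F u y} \<le> L * infdist z (F x y))))"

definition reg_hat_x ::
  "('x::real_normed_vector \<Rightarrow> 'y::real_normed_vector \<Rightarrow> 'z::real_normed_vector set)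
    \<Rightarrow> 'x \<Rightarrow> 'y \<Rightarrow> 'z \<Rightarrow> real" where
  "reg_hat_x F xb yb zb = Inf {L. L \<ge> 0 \<and> metreg_x F xb yb zb L}"

definition inner_sc :: "('a::topological_space \<Rightarrow> 'b::topological_space set) \<Rightarrow> 'a \<Rightarrow> 'b \<Rightarrow> bool" where
  "inner_sc T a b \<longleftrightarrow>
     (\<forall>D. open D \<and> b \<in> D \<longrightarrow> (\<exists>U. open U \<and> a \<in> U \<and> (\<forall>a'\<in>U. T a' \<inter> D \<noteq> {})))"

definition sum_dist :: "('a::real_normed_vector \<times> 'b::real_normed_vector) \<Rightarrow> 'a \<times> 'b \<Rightarrow> real" where
  "sum_dist p q = norm (fst p - fst q) + norm (snd p - snd q)"

definition lip_like_prod ::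
  "('a::real_normed_vector \<times> 'b::real_normed_vector \<Rightarrow> 'c::real_normed_vector set)
    \<Rightarrow> 'a \<times> 'b \<Rightarrow> 'c \<Rightarrow> real \<Rightarrow> bool" where
  "lip_like_prod T pb cb L \<longleftrightarrow>
     (\<exists>U V. open U \<and> pb \<in> U \<and> open V \<and> cb \<in> V \<and>
        (\<forall>p\<in>U. \<forall>q\<in>U. T p \<inter> V \<subseteq> (\<Union>c\<in>T q. cball c (L * sum_dist p q))))"

definition lip_prod ::
  "('a::real_normed_vector \<times> 'b::real_normed_vector \<Rightarrow> 'c::real_normed_vector set)
    \<Rightarrow> 'a \<times> 'b \<Rightarrow> 'c \<Rightarrow> real" where
  "lip_prod T pb cb = Inf {L. L \<ge> 0 \<and> lip_like_prod T pb cb L}"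

definition lip_fun :: "('a::metric_space \<Rightarrow> 'b::metric_space) \<Rightarrow> 'a \<Rightarrow> real" where
  "lip_fun g wb = Inf {L. \<exists>U. open U \<and> wb \<in> U \<and> L-lipschitz_on U g}"

end

theory Submission
  imports Defs
begin

text \<open>Let \<open>x'\<close> solve \<open>0 \<in> F(x',y') + g(w')\<close> near \<open>xb\<close>. Lipschitz-likeness of \<open>F\<close> in \<open>y\<close>
  and the Lipschitz continuity of \<open>g\<close> show that \<open>-g(w)\<close> lies within
  \<open>\<eta>\<parallel>y - y'\<parallel> + \<lambda>\<parallel>w - w'\<parallel>\<close> of \<open>F(x',y)\<close>; metric regularity of \<open>F\<close> in \<open>x\<close> then yields a solution
  \<open>x\<close> of \<open>0 \<in> F(x,y) + g(w)\<close> within \<open>k\<close> times that distance of \<open>x'\<close>, up to an arbitrarily small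
  loss since the infimum defining the distance need not be attained. The bound on the Lipschitz
  modulus follows by applying this with constants arbitrarily close to the respective infima.\<close>

lemma infdist_less_iff:
  assumes "A \<noteq> {}"
  shows "infdist x A < r \<longleftrightarrow> (\<exists>a\<in>A. dist x a < r)"
proof -
  have "bdd_below ((\<lambda>a. dist x a) ` A)"
    by (rule bdd_belowI[where m=0]) auto
  then show ?thesis using assms by (simp add: infdist_notempty cINF_less_iff)
qed

lemma zero_in_translated_iff:
  fixes A :: "'a::ab_group_add set"
  shows "0 \<in> (\<lambda>v. v + c) ` A \<longleftrightarrow> - c \<in> A"
  by (force simp: image_iff add_eq_0_iff2)

lemma open_common_cball:
  fixes a :: "'a::metric_space" and b :: "'b::metric_space" and c :: "'c::metric_space"
  assumes "open A" "a \<in> A" "open B" "b \<in> B" "open C" "c \<in> C"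
  obtains r where "r > 0" "cball a r \<subseteq> A" "cball b r \<subseteq> B" "cball c r \<subseteq> C"
proof -
  obtain ra rb rc where "ra > 0" "cball a ra \<subseteq> A" "rb > 0" "cball b rb \<subseteq> B" "rc > 0" "cball c rc \<subseteq> C"
    using assms open_contains_cball by metis
  then show thesis
    by (intro that[of "min ra (min rb rc)"]) auto
qed

text \<open>The single step of the argument, phrased for sets: \<open>T\<close> plays \<open>F\<^sub>y\<^sup>-\<^sup>1(z)\<close> and
  \<open>A\<close> plays \<open>F\<^sub>y(x)\<close>. The last hypothesis handles \<open>R = 0\<close>, where \<open>T\<close> need not be closed.\<close>

lemma infdist_bound_imp_close_point:
  fixes x :: "'a::metric_space" and z :: "'b::metric_space"
  assumes T: "T \<noteq> {}" "infdist x T \<le> k * infdist z A"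
    and "k \<ge> 0" "\<epsilon> > 0"
    and v: "v \<in> A" "dist z v \<le> R"
    and "z \<in> A \<Longrightarrow> x \<in> T"
  shows "\<exists>u\<in>T. dist x u \<le> (k + \<epsilon>) * R"
proof (cases "R = 0")
  case True
  with v have "x \<in> T" using assms by simp
  then show ?thesis using True by (intro bexI[of _ x]) auto
next
  case False
  with v(2) have R: "R > 0" using zero_le_dist[of z v] by linarith
  have "k * infdist z A \<le> k * R"
    using infdist_le2[OF v] \<open>k \<ge> 0\<close> by (rule mult_left_mono)
  with T(2) have "infdist x T \<le> k * R" by linarith
  also have "\<dots> < (k + \<epsilon>) * R" using R \<open>\<epsilon> > 0\<close> by (simp add: algebra_simps)
  finally obtain u where "u \<in> T" "dist x u < (k + \<epsilon>) * R"
    using infdist_less_iff[OF T(1)] by blast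
  then show ?thesis by (auto intro: less_imp_le)
qed

definition aubin_estimate ::
  "('y::real_normed_vector \<times> 'w::real_normed_vector \<Rightarrow> 'x::real_normed_vector set)
    \<Rightarrow> 'y \<Rightarrow> 'w \<Rightarrow> 'x \<Rightarrow> real \<Rightarrow> real \<Rightarrow> real \<Rightarrow> real \<Rightarrow> bool" where
  "aubin_estimate \<Gamma> yb wb xb \<alpha> k eta lam \<longleftrightarrow>
     (\<forall>y w y' w'. y \<in> cball yb \<alpha> \<and> y' \<in> cball yb \<alpha> \<and> w \<in> cball wb \<alpha> \<and> w' \<in> cball wb \<alpha> \<longrightarrow>
        (\<forall>\<epsilon>>0. \<Gamma> (y', w') \<inter> cball xb \<alpha> \<subseteq>
           (\<Union>x\<in>\<Gamma> (y, w). cball x ((k + \<epsilon>) * (eta * norm (y - y') + lam * norm (w - w'))))))"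

lemma solution_map_aubin_estimate:
  fixes F :: "'x::real_normed_vector \<Rightarrow> 'y::real_normed_vector \<Rightarrow> 'z::real_normed_vector set"
    and g :: "'w::real_normed_vector \<Rightarrow> 'z"
  assumes \<Gamma>: "\<And>y w. \<Gamma> (y, w) = {x. - g w \<in> F x y}"
    and zb: "zb = - g wb"
    and eta: "eta \<ge> 0" "lip_like_y F xb yb zb eta"
    and k: "k \<ge> 0" "metreg_x F xb yb zb k"
    and g: "open Ug" "wb \<in> Ug" "lam-lipschitz_on Ug g"
  shows "\<exists>\<alpha>>0. aubin_estimate \<Gamma> yb wb xb \<alpha> k eta lam"
proof -
  obtain U1 V1 W1 where U1: "open U1" "xb \<in> U1" "open V1" "yb \<in> V1" "open W1" "zb \<in> W1"
    and regular: "\<And>x y z. x \<in> U1 \<Longrightarrow> y \<in> V1 \<Longrightarrow> z \<in> W1 \<Longrightarrow> F x y \<noteq> {} \<Longrightarrow>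
            {u. z \<in> F u y} \<noteq> {} \<and> infdist x {u. z \<in> F u y} \<le> k * infdist z (F x y)"
    using k(2) unfolding metreg_x_def by metis
  obtain U2 V2 W2 where U2: "open U2" "xb \<in> U2" "open V2" "yb \<in> V2" "open W2" "zb \<in> W2"
    and lipschitz_like: "\<And>x y y'. x \<in> U2 \<Longrightarrow> y \<in> V2 \<Longrightarrow> y' \<in> V2 \<Longrightarrow>
            F x y \<inter> W2 \<subseteq> (\<Union>z\<in>F x y'. cball z (eta * norm (y - y')))"
    using eta(2) unfolding lip_like_y_def by metis
  have "open (Ug \<inter> (\<lambda>w. - g w) -` (W1 \<inter> W2))"
    using g U1 U2 by (intro continuous_open_preimage continuous_intros lipschitz_on_continuous_on) auto
  then obtain \<alpha> where "\<alpha> > 0" and \<alpha>: "cball xb \<alpha> \<subseteq> U1 \<inter> U2" "cball yb \<alpha> \<subseteq> V1 \<inter> V2"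
      "cball wb \<alpha> \<subseteq> Ug \<inter> (\<lambda>w. - g w) -` (W1 \<inter> W2)"
    using open_common_cball[of "U1 \<inter> U2" xb "V1 \<inter> V2" yb] U1 U2 g zb by blast
  have "aubin_estimate \<Gamma> yb wb xb \<alpha> k eta lam"
    unfolding aubin_estimate_def
  proof (intro allI impI subsetI)
    fix y w y' w' x' and \<epsilon> :: real
    assume "y \<in> cball yb \<alpha> \<and> y' \<in> cball yb \<alpha> \<and> w \<in> cball wb \<alpha> \<and> w' \<in> cball wb \<alpha>"
      and "\<epsilon> > 0" and x': "x' \<in> \<Gamma> (y', w') \<inter> cball xb \<alpha>"
    then have x'U: "x' \<in> U1" "x' \<in> U2" and yV: "y \<in> V1" "y \<in> V2" "y' \<in> V2"
      and wU: "w \<in> Ug" "w' \<in> Ug" and gW: "- g w \<in> W1" "- g w' \<in> W2"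
      using \<alpha> by auto
    have "- g w' \<in> F x' y' \<inter> W2" using x' gW \<Gamma> by auto
    then obtain v where v: "v \<in> F x' y" "dist (- g w') v \<le> eta * norm (y - y')"
      using lipschitz_like[OF x'U(2) yV(3) yV(2)] by (auto simp: dist_commute norm_minus_commute)
    have "dist (- g w) (- g w') \<le> lam * norm (w - w')"
      using lipschitz_onD[OF g(3) wU] by (simp add: dist_minus dist_norm norm_minus_commute)
    then have "dist (- g w) v \<le> eta * norm (y - y') + lam * norm (w - w')"
      using v(2) dist_triangle[of "- g w" v "- g w'"] by linarith
    moreover note regular[OF x'U(1) yV(1) gW(1)] v(1)
    ultimately obtain x where "- g w \<in> F x y"
      and "dist x' x \<le> (k + \<epsilon>) * (eta * norm (y - y') + lam * norm (w - w'))"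
      using infdist_bound_imp_close_point[of "{u. - g w \<in> F u y}" x' k "- g w" "F x' y" \<epsilon> v]
        k(1) \<open>\<epsilon> > 0\<close> by blast
    then show "x' \<in> (\<Union>x\<in>\<Gamma> (y, w). cball x ((k + \<epsilon>) * (eta * norm (y - y') + lam * norm (w - w'))))"
      using \<Gamma> by (auto simp: dist_commute)
  qed
  with \<open>\<alpha> > 0\<close> show ?thesis by blast
qed

lemma aubin_estimate_imp_lip_like_prod:
  fixes \<Gamma> :: "'y::real_normed_vector \<times> 'w::real_normed_vector \<Rightarrow> 'x::real_normed_vector set"
  assumes "\<alpha> > 0" "aubin_estimate \<Gamma> yb wb xb \<alpha> k eta lam" "e > 0" "k + e \<ge> 0"
  shows "lip_like_prod \<Gamma> (yb, wb) xb ((k + e) * max eta lam)"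
  unfolding lip_like_prod_def
proof (intro exI[of _ "ball yb \<alpha> \<times> ball wb \<alpha>"] exI[of _ "ball xb \<alpha>"] conjI ballI subsetI)
  show "open (ball yb \<alpha> \<times> ball wb \<alpha>)" "open (ball xb \<alpha>)" by (auto intro: open_Times)
  show "(yb, wb) \<in> ball yb \<alpha> \<times> ball wb \<alpha>" "xb \<in> ball xb \<alpha>" using \<open>\<alpha> > 0\<close> by auto
  fix p q x'
  assume "p \<in> ball yb \<alpha> \<times> ball wb \<alpha>" "q \<in> ball yb \<alpha> \<times> ball wb \<alpha>" "x' \<in> \<Gamma> p \<inter> ball xb \<alpha>"
  moreover obtain y' w' y w where pq: "p = (y', w')" "q = (y, w)" by (cases p, cases q)
  ultimately have yw: "y \<in> cball yb \<alpha> \<and> y' \<in> cball yb \<alpha> \<and> w \<in> cball wb \<alpha> \<and> w' \<in> cball wb \<alpha>"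
    and x': "x' \<in> \<Gamma> (y', w') \<inter> cball xb \<alpha>"
    by auto
  obtain x where x: "x \<in> \<Gamma> q"
    and dx: "dist x x' \<le> (k + e) * (eta * norm (y - y') + lam * norm (w - w'))"
    using subsetD[OF assms(2)[unfolded aubin_estimate_def, rule_format, OF yw assms(3)] x'] pq
    by auto
  have "eta * norm (y - y') \<le> max eta lam * norm (y' - y)"
    and "lam * norm (w - w') \<le> max eta lam * norm (w' - w)"
    by (simp_all add: norm_minus_commute mult_right_mono)
  then have "eta * norm (y - y') + lam * norm (w - w') \<le> max eta lam * sum_dist p q"
    unfolding pq sum_dist_def by (simp add: distrib_left)
  then have "(k + e) * (eta * norm (y - y') + lam * norm (w - w')) \<le> (k + e) * max eta lam * sum_dist p q"
    using assms(4) by (simp add: mult_left_mono mult.assoc)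
  with dx have "dist x x' \<le> (k + e) * max eta lam * sum_dist p q" by linarith
  with x show "x' \<in> (\<Union>c\<in>\<Gamma> q. cball c ((k + e) * max eta lam * sum_dist p q))" by auto
qed

lemma Inf_le_mult_max_Inf:
  fixes A B C P :: "real set"
  assumes ne: "A \<noteq> {}" "B \<noteq> {}" "C \<noteq> {}"
    and nonneg: "A \<subseteq> {0..}" "B \<subseteq> {0..}" "C \<subseteq> {0..}" "P \<subseteq> {0..}"
    and closed: "\<And>a b c t. a \<in> A \<Longrightarrow> b \<in> B \<Longrightarrow> c \<in> C \<Longrightarrow> t > 0 \<Longrightarrow> (a + t) * max b c \<in> P"
  shows "Inf P \<le> Inf A * max (Inf B) (Inf C)"
proof -
  have bdd: "bdd_below S" if "S \<subseteq> {0..}" for S :: "real set"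
    using that by (intro bdd_belowI[where m=0]) auto
  have near_Inf: "\<exists>s\<in>S. s < Inf S + t" if "S \<noteq> {}" "S \<subseteq> {0..}" "t > 0" for S :: "real set" and t
    using cInf_less_iff[OF that(1) bdd[OF that(2)], of "Inf S + t"] that(3) by simp
  define M where "M = max (Inf B) (Inf C)"
  have bound: "Inf P \<le> (Inf A + 2 * t) * (M + t)" if t: "t > 0" for t
  proof -
    obtain a b c where abc: "a \<in> A" "a < Inf A + t" "b \<in> B" "b < Inf B + t" "c \<in> C" "c < Inf C + t"
      using near_Inf[OF ne(1) nonneg(1) t] near_Inf[OF ne(2) nonneg(2) t] near_Inf[OF ne(3) nonneg(3) t]
      by blast
    have "Inf P \<le> (a + t) * max b c"
      using closed[OF abc(1,3,5) t] bdd[OF nonneg(4)] by (rule cInf_lower)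
    also have "\<dots> \<le> (Inf A + 2 * t) * (M + t)"
      using abc t nonneg by (intro mult_mono) (auto simp: M_def)
    finally show ?thesis .
  qed
  have "((\<lambda>t. (Inf A + 2 * t) * (M + t)) \<longlongrightarrow> Inf A * M) (at_right 0)"
    by (auto intro!: tendsto_eq_intros)
  moreover have "\<forall>\<^sub>F t in at_right 0. Inf P \<le> (Inf A + 2 * t) * (M + t)"
    using eventually_at_right_less[of "0::real"] by eventually_elim (rule bound)
  ultimately show ?thesis
    unfolding M_def by (rule tendsto_lowerbound) simp
qed

theorem proposition4p1:
  fixes F :: "'x::banach \<Rightarrow> 'y::banach \<Rightarrow> 'z::banach set"
    and g :: "'w::banach \<Rightarrow> 'z"
    and xb :: 'x and yb :: 'y and zb :: 'z and wb :: 'w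
    and \<Gamma> :: "'y \<times> 'w \<Rightarrow> 'x set"
    and eta k lam :: real
  assumes zb_def: "zb = - g wb"
    and zb_in: "zb \<in> F xb yb"
    and Gamma_def: "\<And>y w. \<Gamma> (y, w) = {x. 0 \<in> (\<lambda>v. v + g w) ` F x y}"
    and eta: "eta \<ge> 0" "lip_like_y F xb yb zb eta"
    and k: "k > 0" "metreg_x F xb yb zb k"
    and isc: "\<exists>V. open V \<and> yb \<in> V \<and> (\<forall>y\<in>V. inner_sc (\<lambda>x. F x y) xb zb)"
    and lam: "\<exists>U. open U \<and> wb \<in> U \<and> lam-lipschitz_on U g"
  shows "(\<exists>\<alpha>>0. \<forall>y w y' w'. y \<in> cball yb \<alpha> \<and> y' \<in> cball yb \<alpha> \<and> w \<in> cball wb \<alpha> \<and> w' \<in> cball wb \<alpha> \<longrightarrow>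
            (\<forall>\<epsilon>>0. \<Gamma> (y', w') \<inter> cball xb \<alpha> \<subseteq>
               (\<Union>x\<in>\<Gamma> (y, w). cball x ((k + \<epsilon>) * (eta * norm (y - y') + lam * norm (w - w'))))))
         \<and> (\<exists>L\<ge>0. lip_like_prod \<Gamma> (yb, wb) xb L)
         \<and> lip_prod \<Gamma> (yb, wb) xb \<le>
           reg_hat_x F xb yb zb * max (lip_hat_y F xb yb zb) (lip_fun g wb)"
proof -
  have \<Gamma>: "\<Gamma> (y, w) = {x. - g w \<in> F x y}" for y w
    by (simp add: Gamma_def zero_in_translated_iff)
  have lip_like: "lip_like_prod \<Gamma> (yb, wb) xb ((k' + t) * max eta' lam')"
    if hyps: "k' \<ge> 0" "metreg_x F xb yb zb k'" "eta' \<ge> 0" "lip_like_y F xb yb zb eta'"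
      "open U" "wb \<in> U" "lam'-lipschitz_on U g" "t > 0" for k' eta' lam' t U
  proof -
    obtain \<alpha> where "\<alpha> > 0" "aubin_estimate \<Gamma> yb wb xb \<alpha> k' eta' lam'"
      using solution_map_aubin_estimate[OF \<Gamma> zb_def hyps(3,4,1,2,5-7)] by blast
    then show ?thesis
      by (rule aubin_estimate_imp_lip_like_prod) (use hyps in auto)
  qed
  obtain U where U: "open U" "wb \<in> U" "lam-lipschitz_on U g" using lam by blast
  have "\<exists>\<alpha>>0. aubin_estimate \<Gamma> yb wb xb \<alpha> k eta lam"
    using solution_map_aubin_estimate[OF \<Gamma> zb_def eta _ k(2) U] k(1) by simp
  moreover have "\<exists>L\<ge>0. lip_like_prod \<Gamma> (yb, wb) xb L"
    using lip_like[OF less_imp_le[OF k(1)] k(2) eta U zero_less_one] k(1) eta(1)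
    by (intro exI[of _ "(k + 1) * max eta lam"]) simp
  moreover have "lip_prod \<Gamma> (yb, wb) xb \<le>
           reg_hat_x F xb yb zb * max (lip_hat_y F xb yb zb) (lip_fun g wb)"
    unfolding lip_prod_def reg_hat_x_def lip_hat_y_def lip_fun_def
    using k eta U lip_like
    by (intro Inf_le_mult_max_Inf) (auto dest: lipschitz_on_nonneg intro: less_imp_le)
  ultimately show ?thesis unfolding aubin_estimate_def by blast
qed

end
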